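(* Assume $\bar\Phi_p=0$, $\Phi_p^\top\Phi_p=\mathrm{diag}(\sigma_1^2,\dots,\sigma_d^2)$ with all $\sigma_j^2>0$, and $\delta>0$. Let $\hat w^\delta_{\ell_\infty}$ be the $\ell_\infty$ balancing weights, $\tfrac1n\hat w^\delta_{\ell_\infty}=\mathcal T_\delta(\bar\Phi_q-\bar\Phi_p)(\Phi_p^\top\Phi_p)^{-1}\Phi_p^\top$. Then for every $\hat\beta_{\mathrm{reg}}\in\mathbb{R}^d$, $$\bar\Phi_q\hat\beta_{\mathrm{reg}}+\tfrac1n\hat w^\delta_{\ell_\infty}(Y_p-\Phi_p\hat\beta_{\mathrm{reg}})=\bar\Phi_q\hat\beta_{\ell_\infty},$$ where, with $\Delta_j:=\bar\Phi_{q,j}-\bar\Phi_{p,j}$, $$\hat\beta_{\ell_\infty,j}=\begin{cases}\hat\beta_{\mathrm{reg},j}&\text{if }|\Delta_j|<\delta,\\[2pt] \left|\frac{\delta}{\Delta_j}\right|\hat\beta_{\mathrm{reg},j}+\left(1-\left|\frac{\delta}{\Delta_j}\right|\right)\hat\beta_{\mathrm{ols},j}&\text{otherwise.}\end{cases}$$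
   Context: $\Phi_p\in\mathbb{R}^{n\times d}$ (source features), $Y_p\in\mathbb{R}^n$, $\Phi_q\in\mathbb{R}^{n\times d}$ (target features), column averages $\bar\Phi_p,\bar\Phi_q\in\mathbb{R}^{1\times d}$. $\hat\beta_{\mathrm{ols}}:=(\Phi_p^\top\Phi_p)^{-1}\Phi_p^\top Y_p$. $\mathcal T_t$ is entrywise soft-thresholding: $\mathcal T_t(z)=0$ if $|z|\le t$, $z-t$ if $z>t$, $z+t$ if $z<-t$. These weights solve $\min\|v\|_2^2$ s.t. $\|v\Phi_p-\bar\Phi_q\|_\infty\le\delta$ over $v=\tfrac1n w$. *)

theory Defs
  imports "HOL-Analysis.Analysis"
begin

text \<open>Matrices with n rows and d columns are of type real^'d^'n; row vectors in R^{1 x d}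
  are of type real^'d; column vectors in R^n are of type real^'n.\<close>

definition col_avg :: "real^'d^'n \<Rightarrow> real^'d" where
  "col_avg A = (\<chi> j. (\<Sum>i\<in>UNIV. A $ i $ j) / real CARD('n))"

definition soft_thresh :: "real \<Rightarrow> real \<Rightarrow> real" where
  "soft_thresh t z = (if \<bar>z\<bar> \<le> t then 0 else if z > t then z - t else z + t)"

definition soft_thresh_vec :: "real \<Rightarrow> real^'d \<Rightarrow> real^'d" where
  "soft_thresh_vec t z = (\<chi> j. soft_thresh t (z $ j))"

definition beta_ols :: "real^'d^'n \<Rightarrow> real^'n \<Rightarrow> real^'d" where
  "beta_ols P Y = (matrix_inv (transpose P ** P) ** transpose P) *v Y"

text \<open>v = (1/n) w for the l_inf balancing weights, given by the closed form.\<close>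
definition linf_weights :: "real \<Rightarrow> real^'d^'n \<Rightarrow> real^'d^'n \<Rightarrow> real^'n" where
  "linf_weights \<delta> P Q =
     soft_thresh_vec \<delta> (col_avg Q - col_avg P) v* (matrix_inv (transpose P ** P) ** transpose P)"

definition beta_linf :: "real \<Rightarrow> real^'d^'n \<Rightarrow> real^'d^'n \<Rightarrow> real^'n \<Rightarrow> real^'d \<Rightarrow> real^'d" where
  "beta_linf \<delta> P Q Y breg = (\<chi> j.
     (let \<Delta> = col_avg Q $ j - col_avg P $ j in
      if \<bar>\<Delta>\<bar> < \<delta> then breg $ j
      else \<bar>\<delta> / \<Delta>\<bar> * breg $ j + (1 - \<bar>\<delta> / \<Delta>\<bar>) * beta_ols P Y $ j))"

end

theory Submission
  imports Defs
begin

text \<open>Since \<open>\<Phi>\<^sub>p\<close> has full column rank, \<open>(\<Phi>\<^sub>p\<^sup>T\<Phi>\<^sub>p)\<^sup>-\<^sup>1\<Phi>\<^sub>p\<^sup>T\<close> is a left inverse of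
  \<open>\<Phi>\<^sub>p\<close>, so the weights turn the residual \<open>Y\<^sub>p - \<Phi>\<^sub>p\<beta>\<close> into \<open>\<T>\<^sub>\<delta>(\<Delta>) (\<beta>\<^sub>o\<^sub>l\<^sub>s - \<beta>)\<close>.
  The identity then splits over coordinates, and in coordinate \<open>j\<close> it is the scalar identity
  \<open>\<T>\<^sub>\<delta>(\<Delta>) = (1 - |\<delta>/\<Delta>|) \<Delta>\<close> for \<open>|\<Delta>| \<ge> \<delta>\<close>.\<close>

lemma matrix_inv_left:
  fixes A :: "'a::semiring_1^'n^'n"
  assumes "invertible A"
  shows "matrix_inv A ** A = mat 1"
proof -
  have "\<exists>A'. A ** A' = mat 1 \<and> A' ** A = mat 1"
    using assms unfolding invertible_def .
  then have "A ** matrix_inv A = mat 1 \<and> matrix_inv A ** A = mat 1"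
    unfolding matrix_inv_def by (rule someI_ex)
  then show ?thesis ..
qed

lemma invertible_diagonal:
  fixes s :: "'a::field^'n"
  assumes "\<And>j. s $ j \<noteq> 0"
  shows "invertible (\<chi> i j. if i = j then s $ j else 0)"
  using assms by (simp add: invertible_det_nz det_diagonal)

lemma normal_equations_left_inverse:
  fixes P :: "real^'d^'n"
  assumes "invertible (transpose P ** P)"
  shows "(matrix_inv (transpose P ** P) ** transpose P) ** P = mat 1"
  using matrix_inv_left[OF assms] by (simp add: matrix_mul_assoc)

lemma ols_of_residual:
  fixes P :: "real^'d^'n"
  assumes "invertible (transpose P ** P)"
  shows "(matrix_inv (transpose P ** P) ** transpose P) *v (Y - P *v \<beta>) = beta_ols P Y - \<beta>"
  unfolding beta_ols_def
  by (simp add: matrix_vector_mult_diff_distrib matrix_vector_mul_assoc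
      normal_equations_left_inverse[OF assms])

lemma linf_weights_inner_residual:
  fixes P Q :: "real^'d^'n"
  assumes "invertible (transpose P ** P)"
  shows "linf_weights \<delta> P Q \<bullet> (Y - P *v \<beta>)
    = soft_thresh_vec \<delta> (col_avg Q - col_avg P) \<bullet> (beta_ols P Y - \<beta>)"
  unfolding linf_weights_def by (simp add: dot_lmul_matrix ols_of_residual[OF assms])

lemma soft_thresh_interpolation:
  fixes \<delta> q b c :: real
  assumes "\<delta> \<ge> 0"
  shows "q * b + soft_thresh \<delta> q * (c - b)
    = q * (if \<bar>q\<bar> < \<delta> then b else \<bar>\<delta> / q\<bar> * b + (1 - \<bar>\<delta> / q\<bar>) * c)"
  using assms by (cases "q > 0"; cases "q = 0") (auto simp: soft_thresh_def abs_if field_simps)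

theorem mainTheorem7:
  fixes P Q :: "real^'d^'n" and Y :: "real^'n" and \<delta> :: real
    and \<sigma>sq :: "real^'d" and breg :: "real^'d"
  assumes "col_avg P = 0"
    and "transpose P ** P = (\<chi> i j. if i = j then \<sigma>sq $ j else 0)"
    and "\<forall>j. \<sigma>sq $ j > 0"
    and "\<delta> > 0"
  shows "col_avg Q \<bullet> breg + linf_weights \<delta> P Q \<bullet> (Y - P *v breg)
         = col_avg Q \<bullet> beta_linf \<delta> P Q Y breg"
proof -
  have "invertible (transpose P ** P)"
    using assms(2,3) invertible_diagonal[of \<sigma>sq] by (simp add: less_imp_neq[symmetric])
  then have "linf_weights \<delta> P Q \<bullet> (Y - P *v breg)
      = soft_thresh_vec \<delta> (col_avg Q) \<bullet> (beta_ols P Y - breg)"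
    using assms(1) by (simp add: linf_weights_inner_residual)
  also have "col_avg Q \<bullet> breg + \<dots>
      = (\<Sum>j\<in>UNIV. col_avg Q $ j * breg $ j
          + soft_thresh \<delta> (col_avg Q $ j) * (beta_ols P Y $ j - breg $ j))"
    by (simp add: inner_vec_def sum.distrib soft_thresh_vec_def)
  also have "\<dots> = col_avg Q \<bullet> beta_linf \<delta> P Q Y breg"
    using assms(1,4)
    by (simp add: inner_vec_def beta_linf_def Let_def soft_thresh_interpolation)
  finally show ?thesis .
qed

end
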